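(* Let $U\in C^\infty(\mathbb{R}^{2d})$ be real and satisfy Hypothesis (U), with associated symplectomorphism $\Phi$. An operator $W\in\mathbb{B}(\mathcal S(\mathbb{R}^d);\mathcal S'(\mathbb{R}^d))$ is of the form $\mathfrak{Op}^A_\Phi(a)$ with $a\in S^{-\infty}(\mathbb{R}^d)$ if and only if there exists $b\in S^{-\infty}(\mathbb{R}^d)$ with $W=b^A(x,D)$.
   Context: Notation: $\langle\xi\rangle=(1+|\xi|^2)^{1/2}$, $\bar d\eta=(2\pi)^{-d}d\eta$. $S^m(\mathbb{R}^d)$: $a\in C^\infty(\mathbb{R}^{2d})$ with $|\partial_x^\alpha\partial_\xi^\beta a|\le C_{\alpha\beta}\langle\xi\rangle^{m-|\beta|}$; $S^{-\infty}=\bigcap_mS^m$. $S^+$: smooth $f$ with $\partial_{x_j}f\in S^1$, $\partial_{\xi_j}f\in S^0$. Hypothesis (U): $U(x,\eta)=\langle x,\eta\rangle+d(x,\eta)$, $d\in S^+$ real, $\|(\partial_{x_j}\partial_{\eta_k}d)\|\le\delta<1$ everywhere; $\Phi(\nabla_\eta U(x,\eta),\eta)=(x,\nabla_xU(x,\eta))$. Magnetic field $B=\frac12\sum B_{jk}dx_j\wedge dx_k$ closed, real $B_{jk}=-B_{kj}\in BC^\infty$; $A$ real 1-form with smooth polynomially bounded coefficients, $dA=B$; $\omega^A(x,y)=\exp\{-i\int_{[x,y]}A\}$ (line integral along the segment $x\to y$). $[b^A(x,D)u](x)=\iint e^{i\langle x-y,\eta\rangle}\omega^A(x,y)b(x,\eta)u(y)dy\,\bar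 d\eta$; $[\mathfrak{Op}^A_\Phi(a)u](x)=\iint e^{i(U(x,\eta)-\langle y,\eta\rangle)}\omega^A(x,y)a(x,\eta)u(y)dy\,\bar d\eta$. *)

theory Defs
  imports "HOL-Analysis.Analysis"
begin

type_synonym ('n) phase_pt = "(real^'n) \<times> (real^'n)"

text \<open>Iterated directional (Frechet) derivatives. The head of the list is applied last.\<close>
primrec pderivs :: "('a::real_normed_vector \<Rightarrow> 'b::real_normed_vector) \<Rightarrow> 'a list \<Rightarrow> 'a \<Rightarrow> 'b" where
  "pderivs f [] = f"
| "pderivs f (v # vs) = (\<lambda>p. frechet_derivative (pderivs f vs) (at p) v)"

definition smooth :: "('a::real_normed_vector \<Rightarrow> 'b::real_normed_vector) \<Rightarrow> bool" where
  "smooth f \<longleftrightarrow> (\<forall>vs p. pderivs f vs differentiable (at p))"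

definition jbr :: "real^'n \<Rightarrow> real" where
  "jbr \<xi> = sqrt (1 + (norm \<xi>)\<^sup>2)"

definition xdirs :: "('n::finite) phase_pt set" where
  "xdirs = {(axis i 1, 0) | i. True}"

definition xidirs :: "('n::finite) phase_pt set" where
  "xidirs = {(0, axis j 1) | j. True}"

text \<open>Hoermander symbol class S^m (on R^d x R^d, d = CARD('n)).
  A list vs of coordinate directions encodes a multi-index (alpha, beta);
  |beta| is the number of xi-directions in vs.\<close>
definition symb :: "real \<Rightarrow> (('n::finite) phase_pt \<Rightarrow> 'b::real_normed_vector) set" where
  "symb m = {a. smooth a \<and>
     (\<forall>vs. set vs \<subseteq> xdirs \<union> xidirs \<longrightarrow>
        (\<exists>C. \<forall>x \<xi>. norm (pderivs a vs (x, \<xi>))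
               \<le> C * jbr \<xi> powr (m - real (length (filter (\<lambda>v. v \<in> xidirs) vs)))))}"

definition symb_minus_inf :: "(('n::finite) phase_pt \<Rightarrow> 'b::real_normed_vector) set" where
  "symb_minus_inf = (\<Inter>m. symb m)"

definition symb_plus :: "(('n::finite) phase_pt \<Rightarrow> 'b::real_normed_vector) set" where
  "symb_plus = {f. smooth f \<and>
     (\<forall>j. pderivs f [(axis j 1, 0)] \<in> symb 1 \<and> pderivs f [(0, axis j 1)] \<in> symb 0)}"

text \<open>Hypothesis (U): U(x,eta) = <x,eta> + d(x,eta), d in S^+ real, and the matrix
  (d_{x_j} d_{eta_k} d) has operator norm at most delta < 1 everywhere
  (expressed as the bound on the associated bilinear form).\<close>
definition hyp_U :: "(('n::finite) phase_pt \<Rightarrow> real) \<Rightarrow> bool" where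
  "hyp_U U \<longleftrightarrow> (\<exists>d \<delta>. d \<in> symb_plus \<and> \<delta> < 1 \<and>
      (\<forall>x \<eta>. U (x, \<eta>) = x \<bullet> \<eta> + d (x, \<eta>)) \<and>
      (\<forall>x \<eta> v w. \<bar>pderivs d [(v, 0), (0, w)] (x, \<eta>)\<bar> \<le> \<delta> * norm v * norm w))"

text \<open>Magnetic potential A (components A_j, a real 1-form) with smooth polynomially
  bounded coefficients, whose differential B = dA, B_jk = d_j A_k - d_k A_j,
  has coefficients in BC-infinity (closedness of B is automatic).\<close>
definition mag_field :: "(real^'n \<Rightarrow> real^'n) \<Rightarrow> 'n \<Rightarrow> 'n \<Rightarrow> real^'n \<Rightarrow> real" where
  "mag_field A j k x =
     frechet_derivative (\<lambda>y. A y $ k) (at x) (axis j 1)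
   - frechet_derivative (\<lambda>y. A y $ j) (at x) (axis k 1)"

definition magnetic_potential :: "(real^'n \<Rightarrow> real^'n) \<Rightarrow> bool" where
  "magnetic_potential A \<longleftrightarrow>
     (\<forall>j. smooth (\<lambda>x. A x $ j)) \<and>
     (\<exists>C N. \<forall>x. norm (A x) \<le> C * (1 + norm x) ^ N) \<and>
     (\<forall>j k. smooth (mag_field A j k) \<and>
        (\<forall>vs. \<exists>C. \<forall>x. \<bar>pderivs (mag_field A j k) vs x\<bar> \<le> C))"

definition schwartz :: "(real^'n \<Rightarrow> complex) \<Rightarrow> bool" where
  "schwartz u \<longleftrightarrow> smooth u \<and>
     (\<forall>vs (N::nat). \<exists>C. \<forall>x. (1 + norm x) ^ N * norm (pderivs u vs x) \<le> C)"

text \<open>omega^A(x,y) = exp(-i int_{[x,y]} A), segment parametrised by x + t(y - x).\<close>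
definition omegaA :: "(real^'n \<Rightarrow> real^'n) \<Rightarrow> real^'n \<Rightarrow> real^'n \<Rightarrow> complex" where
  "omegaA A x y = cis (- integral {0..1} (\<lambda>t. A (x + t *\<^sub>R (y - x)) \<bullet> (y - x)))"

definition dbar :: "'n::finite itself \<Rightarrow> complex" where
  "dbar (_::'n itself) = complex_of_real ((2 * pi) powr (- real CARD('n)))"

text \<open>Magnetic quantization b^A(x,D) (iterated integral: dy inside, d-bar eta outside).\<close>
definition OpA :: "(real^'n \<Rightarrow> real^'n) \<Rightarrow> (('n::finite) phase_pt \<Rightarrow> complex)
                   \<Rightarrow> (real^'n \<Rightarrow> complex) \<Rightarrow> real^'n \<Rightarrow> complex" where
  "OpA A b u x = dbar TYPE('n) * integral UNIV (\<lambda>\<eta>. integral UNIV (\<lambda>y.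
      cis ((x - y) \<bullet> \<eta>) * omegaA A x y * b (x, \<eta>) * u y))"

definition OpPhiA :: "(('n::finite) phase_pt \<Rightarrow> real) \<Rightarrow> (real^'n \<Rightarrow> real^'n) \<Rightarrow> (('n::finite) phase_pt \<Rightarrow> complex)
                   \<Rightarrow> (real^'n \<Rightarrow> complex) \<Rightarrow> real^'n \<Rightarrow> complex" where
  "OpPhiA U A a u x = dbar TYPE('n) * integral UNIV (\<lambda>\<eta>. integral UNIV (\<lambda>y.
      cis (U (x, \<eta>) - y \<bullet> \<eta>) * omegaA A x y * a (x, \<eta>) * u y))"

end

theory Submission
  imports Defs
begin

text \<open>Write \<open>U(x,\<eta>) = \<langle>x,\<eta>\<rangle> + d(x,\<eta>)\<close> with \<open>d \<in> S\<^sup>+\<close>. The phases of \<open>Op^A_\<Phi>(a)\<close> and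
  \<open>b^A(x,D)\<close> differ by \<open>d(x,\<eta>)\<close>, which does not involve \<open>y\<close>, so
  \<open>Op^A_\<Phi>(a) = (e^{id} a)^A(x,D)\<close> and \<open>b^A(x,D) = Op^A_\<Phi>(e^{-id} b)\<close> whatever the magnetic
  potential is. It remains to see that multiplication by \<open>e^{\<plusminus>id}\<close> preserves \<open>S^{-\<infinity>}\<close>. The first
  derivatives of \<open>d\<close> are symbols, hence polynomially bounded in \<open>\<xi>\<close>, and every derivative of
  \<open>e^{icd}\<close> is \<open>e^{icd}\<close> times a polynomial in derivatives of \<open>d\<close>. So \<open>e^{icd}\<close> lies in the algebra
  of smooth functions all of whose derivatives are polynomially bounded in \<open>\<xi>\<close>, uniformly in \<open>x\<close>,
  and by the Leibniz rule this algebra multiplies \<open>S^{-\<infinity>}\<close> into itself.\<close>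

definition dderiv :: "('a::real_normed_vector \<Rightarrow> 'b::real_normed_vector) \<Rightarrow> 'a \<Rightarrow> 'a \<Rightarrow> 'b" where
  "dderiv f v = (\<lambda>p. frechet_derivative f (at p) v)"

lemma pderivs_Cons: "pderivs f (v # vs) = dderiv (pderivs f vs) v"
  by (simp add: dderiv_def)

lemma pderivs_append: "pderivs (pderivs f us) vs = pderivs f (vs @ us)"
  by (induction vs) auto

lemma pderivs_dderiv: "pderivs (dderiv f v) vs = pderivs f (vs @ [v])"
  using pderivs_append[of f "[v]" vs] by (simp add: dderiv_def)

lemma dderiv_eqI:
  assumes "\<And>p. (f has_derivative D p) (at p)"
  shows "dderiv f v = (\<lambda>p. D p v)"
  using frechet_derivative_at[OF assms] by (simp add: dderiv_def)

lemma pderivs_in_dderiv_closed: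
  assumes "f \<in> M" "\<And>g v. g \<in> M \<Longrightarrow> v \<in> S \<Longrightarrow> dderiv g v \<in> M" "set vs \<subseteq> S"
  shows "pderivs f vs \<in> M"
  using assms(3) by (induction vs) (auto simp del: pderivs.simps(2) simp: pderivs_Cons assms(1,2))

lemma smooth_differentiable: "smooth f \<Longrightarrow> f differentiable (at p)"
  unfolding smooth_def by (metis pderivs.simps(1))

lemma smooth_has_derivative: "smooth f \<Longrightarrow> (f has_derivative frechet_derivative f (at p)) (at p)"
  by (simp add: smooth_differentiable flip: frechet_derivative_works)

lemma smooth_pderivs: "smooth f \<Longrightarrow> smooth (pderivs f us)"
  unfolding smooth_def by (simp add: pderivs_append)

lemma smooth_dderiv: "smooth f \<Longrightarrow> smooth (dderiv f v)"
  unfolding smooth_def by (simp add: pderivs_dderiv)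

lemma dderiv_const: "dderiv (\<lambda>_. c) v = (\<lambda>_. 0)"
  using dderiv_eqI[of "\<lambda>_. c" "\<lambda>_ _. 0"] by simp

lemma pderivs_const: "pderivs (\<lambda>_. c) vs = (\<lambda>_. if vs = [] then c else 0)"
  by (induction vs) (auto simp del: pderivs.simps(2) simp: pderivs_Cons dderiv_const)

lemma smooth_const: "smooth (\<lambda>_. c)"
  unfolding smooth_def by (simp add: pderivs_const)

lemma pderivs_linear:
  assumes "bounded_linear L" "smooth f"
  shows "pderivs (\<lambda>p. L (f p)) vs = (\<lambda>p. L (pderivs f vs p))"
proof (induction vs)
  case (Cons v vs)
  have "((\<lambda>p. L (pderivs f vs p)) has_derivative
          (\<lambda>w. L (frechet_derivative (pderivs f vs) (at p) w))) (at p)" for p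
    by (rule bounded_linear.has_derivative[OF assms(1) smooth_has_derivative[OF smooth_pderivs[OF assms(2)]]])
  from dderiv_eqI[OF this] show ?case
    by (simp del: pderivs.simps(2) add: Cons pderivs_Cons dderiv_def)
qed simp

lemma smooth_linear:
  assumes "bounded_linear L" "smooth f"
  shows "smooth (\<lambda>p. L (f p))"
  unfolding smooth_def pderivs_linear[OF assms]
proof (intro allI)
  fix vs p
  have "L differentiable (at (pderivs f vs p))"
    using assms(1) bounded_linear_imp_differentiable by blast
  then show "(\<lambda>p. L (pderivs f vs p)) differentiable (at p)"
    using differentiable_compose assms(2) smooth_def by blast
qed

primrec sum_prods :: "(('a \<Rightarrow> 'b::real_normed_algebra) \<times> ('a \<Rightarrow> 'b)) list \<Rightarrow> 'a \<Rightarrow> 'b" where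
  "sum_prods [] = (\<lambda>p. 0)"
| "sum_prods (fg # fgs) = (\<lambda>p. fst fg p * snd fg p + sum_prods fgs p)"

primrec leibniz_terms ::
  "(('a::real_normed_vector \<Rightarrow> 'b::real_normed_algebra) \<times> ('a \<Rightarrow> 'b)) list \<Rightarrow> 'a
     \<Rightarrow> (('a \<Rightarrow> 'b) \<times> ('a \<Rightarrow> 'b)) list" where
  "leibniz_terms [] v = []"
| "leibniz_terms (fg # fgs) v =
     (dderiv (fst fg) v, snd fg) # (fst fg, dderiv (snd fg) v) # leibniz_terms fgs v"

lemma has_derivative_sum_prods:
  assumes "\<forall>(f, g)\<in>set fgs. \<forall>q. f differentiable (at q) \<and> g differentiable (at q)"
  shows "(sum_prods fgs has_derivative (\<lambda>v. sum_prods (leibniz_terms fgs v) p)) (at p)"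
  using assms
proof (induction fgs)
  case (Cons fg fgs)
  obtain f g where fg: "fg = (f, g)" by (cases fg)
  have "(f has_derivative frechet_derivative f (at p)) (at p)"
    and "(g has_derivative frechet_derivative g (at p)) (at p)"
    using Cons.prems fg by (auto simp flip: frechet_derivative_works)
  with Cons show ?case
    by (auto simp: fg dderiv_def algebra_simps intro!: derivative_eq_intros)
qed simp

lemma dderiv_sum_prods:
  assumes "\<forall>(f, g)\<in>set fgs. \<forall>q. f differentiable (at q) \<and> g differentiable (at q)"
  shows "dderiv (sum_prods fgs) v = sum_prods (leibniz_terms fgs v)"
  using dderiv_eqI[OF has_derivative_sum_prods[OF assms]] by simp

lemma leibniz_terms_preserves:
  assumes "\<forall>(f, g)\<in>set fgs. P f \<and> Q g" "\<And>f. P f \<Longrightarrow> P (dderiv f v)" "\<And>g. Q g \<Longrightarrow> Q (dderiv g v)"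
  shows "\<forall>(f, g)\<in>set (leibniz_terms fgs v). P f \<and> Q g"
  using assms(1) by (induction fgs) (auto simp: assms(2,3))

lemma pderivs_sum_prods:
  assumes fgs: "\<forall>(f, g)\<in>set fgs. P f \<and> Q g"
    and diff: "\<And>f p. P f \<Longrightarrow> f differentiable (at p)" "\<And>g p. Q g \<Longrightarrow> g differentiable (at p)"
    and closed: "\<And>f v. P f \<Longrightarrow> v \<in> S \<Longrightarrow> P (dderiv f v)" "\<And>g v. Q g \<Longrightarrow> v \<in> S \<Longrightarrow> Q (dderiv g v)"
    and vs: "set vs \<subseteq> S"
  shows "\<exists>hs. (\<forall>(f, g)\<in>set hs. P f \<and> Q g) \<and> pderivs (sum_prods fgs) vs = sum_prods hs"
proof -
  define M where "M = {sum_prods hs | hs. \<forall>(f, g)\<in>set hs. P f \<and> Q g}"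
  have "dderiv h v \<in> M" if "h \<in> M" "v \<in> S" for h v
  proof -
    from \<open>h \<in> M\<close> obtain hs where hs: "h = sum_prods hs" "\<forall>(f, g)\<in>set hs. P f \<and> Q g"
      unfolding M_def by blast
    then have "dderiv h v = sum_prods (leibniz_terms hs v)"
      using diff by (fastforce intro: dderiv_sum_prods)
    moreover have "\<forall>(f, g)\<in>set (leibniz_terms hs v). P f \<and> Q g"
      using hs(2) closed \<open>v \<in> S\<close> by (intro leibniz_terms_preserves)
    ultimately show ?thesis unfolding M_def by blast
  qed
  moreover have "sum_prods fgs \<in> M" using fgs unfolding M_def by blast
  ultimately have "pderivs (sum_prods fgs) vs \<in> M" using pderivs_in_dderiv_closed vs by blast
  then show ?thesis unfolding M_def by blast
qed

lemma smooth_sum_prods: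
  assumes "\<forall>(f, g)\<in>set fgs. smooth f \<and> smooth g"
  shows "smooth (sum_prods fgs)"
  unfolding smooth_def
proof (intro allI)
  fix vs p
  obtain hs where hs: "\<forall>(f, g)\<in>set hs. smooth f \<and> smooth g" "pderivs (sum_prods fgs) vs = sum_prods hs"
    using pderivs_sum_prods[of fgs smooth smooth UNIV vs] assms smooth_differentiable smooth_dderiv
    by blast
  then show "pderivs (sum_prods fgs) vs differentiable (at p)"
    using has_derivative_sum_prods[of hs p] smooth_differentiable
    unfolding differentiable_def by fastforce
qed

lemma smooth_mult:
  fixes f g :: "'a::real_normed_vector \<Rightarrow> 'b::real_normed_algebra"
  assumes "smooth f" "smooth g"
  shows "smooth (\<lambda>p. f p * g p)"
  using smooth_sum_prods[of "[(f, g)]"] assms by simp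

lemma smooth_add:
  fixes f g :: "'a::real_normed_vector \<Rightarrow> 'b::real_normed_algebra_1"
  assumes "smooth f" "smooth g"
  shows "smooth (\<lambda>p. f p + g p)"
  using smooth_sum_prods[of "[(f, \<lambda>_. 1), (g, \<lambda>_. 1)]"] assms by (simp add: smooth_const)

abbreviation coord_dirs :: "('n::finite) phase_pt set" where
  "coord_dirs \<equiv> xdirs \<union> xidirs"

lemma jbr_ge_1: "1 \<le> jbr \<xi>"
  unfolding jbr_def by simp

lemma jbr_powr_mono: "m \<le> m' \<Longrightarrow> jbr \<xi> powr m \<le> jbr \<xi> powr m'"
  by (simp add: powr_mono jbr_ge_1)

definition jbr_bounded :: "(('n::finite) phase_pt \<Rightarrow> 'b::real_normed_vector) \<Rightarrow> real \<Rightarrow> bool" where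
  "jbr_bounded f m \<longleftrightarrow> (\<exists>C. \<forall>x \<xi>. norm (f (x, \<xi>)) \<le> C * jbr \<xi> powr m)"

lemma jbr_bounded_nonneg:
  assumes "jbr_bounded f m"
  shows "\<exists>C\<ge>0. \<forall>x \<xi>. norm (f (x, \<xi>)) \<le> C * jbr \<xi> powr m"
proof -
  obtain C where C: "\<And>x \<xi>. norm (f (x, \<xi>)) \<le> C * jbr \<xi> powr m"
    using assms unfolding jbr_bounded_def by blast
  have "norm (f (x, \<xi>)) \<le> \<bar>C\<bar> * jbr \<xi> powr m" for x \<xi>
    using C[of x \<xi>] by (smt (verit) mult_right_mono powr_ge_zero)
  then show ?thesis using abs_ge_zero by blast
qed

lemma jbr_bounded_mono:
  assumes "jbr_bounded f m" "m \<le> m'"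
  shows "jbr_bounded f m'"
proof -
  obtain C where "0 \<le> C" "\<And>x \<xi>. norm (f (x, \<xi>)) \<le> C * jbr \<xi> powr m"
    using jbr_bounded_nonneg[OF assms(1)] by blast
  then have "norm (f (x, \<xi>)) \<le> C * jbr \<xi> powr m'" for x \<xi>
    using mult_left_mono[OF jbr_powr_mono[OF assms(2)]] order_trans by blast
  then show ?thesis unfolding jbr_bounded_def by blast
qed

lemma jbr_bounded_add:
  assumes "jbr_bounded f m" "jbr_bounded g m"
  shows "jbr_bounded (\<lambda>p. f p + g p) m"
proof -
  obtain C D where "\<And>x \<xi>. norm (f (x, \<xi>)) \<le> C * jbr \<xi> powr m" "\<And>x \<xi>. norm (g (x, \<xi>)) \<le> D * jbr \<xi> powr m"
    using assms unfolding jbr_bounded_def by blast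
  then have "norm (f (x, \<xi>) + g (x, \<xi>)) \<le> (C + D) * jbr \<xi> powr m" for x \<xi>
    by (smt (verit) distrib_right norm_triangle_ineq)
  then show ?thesis unfolding jbr_bounded_def by blast
qed

lemma jbr_bounded_mult:
  fixes f g :: "('n::finite) phase_pt \<Rightarrow> 'b::real_normed_div_algebra"
  assumes "jbr_bounded f m" "jbr_bounded g m'"
  shows "jbr_bounded (\<lambda>p. f p * g p) (m + m')"
proof -
  obtain C where "0 \<le> C" "\<And>x \<xi>. norm (f (x, \<xi>)) \<le> C * jbr \<xi> powr m"
    using jbr_bounded_nonneg[OF assms(1)] by blast
  moreover obtain D where "0 \<le> D" "\<And>x \<xi>. norm (g (x, \<xi>)) \<le> D * jbr \<xi> powr m'"
    using jbr_bounded_nonneg[OF assms(2)] by blast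
  ultimately have "norm (f (x, \<xi>) * g (x, \<xi>)) \<le> (C * jbr \<xi> powr m) * (D * jbr \<xi> powr m')" for x \<xi>
    unfolding norm_mult by (intro mult_mono) auto
  then have "norm (f (x, \<xi>) * g (x, \<xi>)) \<le> (C * D) * jbr \<xi> powr (m + m')" for x \<xi>
    by (simp add: powr_add algebra_simps)
  then show ?thesis unfolding jbr_bounded_def by blast
qed

lemma jbr_bounded_const: "jbr_bounded (\<lambda>_ :: ('n::finite) phase_pt. c) 0"
proof -
  have "jbr \<xi> \<noteq> 0" for \<xi> :: "real^'n"
    using jbr_ge_1[of \<xi>] by linarith
  then have "norm c \<le> norm c * jbr \<xi> powr 0" for \<xi> :: "real^'n"
    by simp
  then show ?thesis unfolding jbr_bounded_def by blast
qed

lemma jbr_bounded_zero: "jbr_bounded (\<lambda>_. 0) m"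
  unfolding jbr_bounded_def by (intro exI[of _ 0]) simp

text \<open>Unlike in \<open>S^m\<close>, \<open>\<xi>\<close>-derivatives gain no decay, and the growth exponent may depend on the
  derivative taken.\<close>
definition symb_tempered :: "(('n::finite) phase_pt \<Rightarrow> 'b::real_normed_vector) set" where
  "symb_tempered = {f. smooth f \<and> (\<forall>vs. set vs \<subseteq> coord_dirs \<longrightarrow> (\<exists>m. jbr_bounded (pderivs f vs) m))}"

lemma symb_tempered_smooth: "f \<in> symb_tempered \<Longrightarrow> smooth f"
  unfolding symb_tempered_def by blast

lemma symb_tempered_dderiv: "f \<in> symb_tempered \<Longrightarrow> v \<in> coord_dirs \<Longrightarrow> dderiv f v \<in> symb_tempered"
  unfolding symb_tempered_def by (auto simp: pderivs_dderiv smooth_dderiv)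

lemma symb_bound_jbr_bounded:
  assumes "a \<in> symb r" "set vs \<subseteq> coord_dirs"
  shows "jbr_bounded (pderivs a vs) (r - real (length (filter (\<lambda>v. v \<in> xidirs) vs)))"
  using assms unfolding symb_def jbr_bounded_def by blast

lemma symb_subset_symb_tempered: "symb r \<subseteq> symb_tempered"
  unfolding symb_tempered_def using symb_bound_jbr_bounded by (auto simp: symb_def)

lemma symb_minus_inf_iff:
  "a \<in> symb_minus_inf \<longleftrightarrow>
     smooth a \<and> (\<forall>vs. set vs \<subseteq> coord_dirs \<longrightarrow> (\<forall>m. jbr_bounded (pderivs a vs) m))"
proof
  assume "a \<in> symb_minus_inf"
  then have a_symb: "a \<in> symb m" for m unfolding symb_minus_inf_def by blast
  show "smooth a \<and> (\<forall>vs. set vs \<subseteq> coord_dirs \<longrightarrow> (\<forall>m. jbr_bounded (pderivs a vs) m))"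
  proof (intro conjI allI impI)
    show "smooth a" using a_symb[of 0] unfolding symb_def by blast
    fix vs :: "'a phase_pt list" and m assume "set vs \<subseteq> coord_dirs"
    then show "jbr_bounded (pderivs a vs) m"
      by (rule jbr_bounded_mono[OF symb_bound_jbr_bounded[OF a_symb[of m]]]) simp
  qed
next
  assume "smooth a \<and> (\<forall>vs. set vs \<subseteq> coord_dirs \<longrightarrow> (\<forall>m. jbr_bounded (pderivs a vs) m))"
  then show "a \<in> symb_minus_inf"
    unfolding symb_minus_inf_def symb_def jbr_bounded_def by blast
qed

lemma symb_minus_inf_dderiv:
  "a \<in> symb_minus_inf \<Longrightarrow> v \<in> coord_dirs \<Longrightarrow> dderiv a v \<in> symb_minus_inf"
  unfolding symb_minus_inf_iff by (auto simp: pderivs_dderiv smooth_dderiv)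

lemma const_in_symb_tempered: "(\<lambda>_. c) \<in> symb_tempered"
  unfolding symb_tempered_def using jbr_bounded_const
  by (auto simp: smooth_const pderivs_const)

lemma symb_tempered_linear:
  fixes f :: "('n::finite) phase_pt \<Rightarrow> 'b::real_normed_vector"
  assumes L: "bounded_linear L" and f: "f \<in> symb_tempered"
  shows "(\<lambda>p. L (f p)) \<in> symb_tempered"
  unfolding symb_tempered_def
proof (intro CollectI conjI allI impI)
  show "smooth (\<lambda>p. L (f p))" using L f by (simp add: smooth_linear symb_tempered_smooth)
  fix vs :: "'n phase_pt list" assume "set vs \<subseteq> coord_dirs"
  then obtain m C where C: "\<And>x \<xi>. norm (pderivs f vs (x, \<xi>)) \<le> C * jbr \<xi> powr m"
    using f unfolding symb_tempered_def jbr_bounded_def by blast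
  obtain K where K: "\<And>y. norm (L y) \<le> norm y * K" "0 < K"
    using bounded_linear.pos_bounded[OF L] by blast
  have "norm (L (pderivs f vs (x, \<xi>))) \<le> (C * K) * jbr \<xi> powr m" for x \<xi>
    using order_trans[OF K(1) mult_right_mono[OF C less_imp_le[OF K(2)]]] by (simp add: algebra_simps)
  then show "\<exists>m. jbr_bounded (pderivs (\<lambda>p. L (f p)) vs) m"
    unfolding pderivs_linear[OF L symb_tempered_smooth[OF f]] jbr_bounded_def by blast
qed

lemma jbr_bounded_sum_prods_tempered:
  fixes fgs :: "((('n::finite) phase_pt \<Rightarrow> 'b::real_normed_div_algebra) \<times> ('n phase_pt \<Rightarrow> 'b)) list"
  assumes "\<forall>(f, g)\<in>set fgs. (\<exists>m. jbr_bounded f m) \<and> (\<exists>m. jbr_bounded g m)"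
  shows "\<exists>m. jbr_bounded (sum_prods fgs) m"
  using assms
proof (induction fgs)
  case Nil
  show ?case using jbr_bounded_zero by auto
next
  case (Cons fg fgs)
  obtain mf mg m where "jbr_bounded (fst fg) mf" "jbr_bounded (snd fg) mg" "jbr_bounded (sum_prods fgs) m"
    using Cons by (cases fg) auto
  then have "jbr_bounded (\<lambda>p. fst fg p * snd fg p) (max (mf + mg) m)"
    and "jbr_bounded (sum_prods fgs) (max (mf + mg) m)"
    by (auto intro: jbr_bounded_mono jbr_bounded_mult)
  then show ?case by (auto dest: jbr_bounded_add)
qed

lemma jbr_bounded_sum_prods_decaying:
  fixes fgs :: "((('n::finite) phase_pt \<Rightarrow> 'b::real_normed_div_algebra) \<times> ('n phase_pt \<Rightarrow> 'b)) list"
  assumes "\<forall>(f, g)\<in>set fgs. (\<exists>m. jbr_bounded f m) \<and> (\<forall>m. jbr_bounded g m)"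
  shows "jbr_bounded (sum_prods fgs) m"
  using assms
proof (induction fgs)
  case Nil
  show ?case using jbr_bounded_zero by simp
next
  case (Cons fg fgs)
  obtain mf where "jbr_bounded (fst fg) mf" "jbr_bounded (snd fg) (m - mf)"
    using Cons.prems by (cases fg) auto
  then have "jbr_bounded (\<lambda>p. fst fg p * snd fg p) (mf + (m - mf))"
    by (rule jbr_bounded_mult)
  with Cons show ?case by (auto dest: jbr_bounded_add)
qed

lemma symb_tempered_differentiable: "f \<in> symb_tempered \<Longrightarrow> f differentiable (at p)"
  by (rule smooth_differentiable[OF symb_tempered_smooth])

lemma symb_tempered_jbr_bounded: "f \<in> symb_tempered \<Longrightarrow> \<exists>m. jbr_bounded f m"
  unfolding symb_tempered_def by (auto dest!: spec[of _ "[]"])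

lemma symb_minus_inf_smooth: "a \<in> symb_minus_inf \<Longrightarrow> smooth a"
  by (simp add: symb_minus_inf_iff)

lemma symb_minus_inf_differentiable: "a \<in> symb_minus_inf \<Longrightarrow> a differentiable (at p)"
  by (rule smooth_differentiable[OF symb_minus_inf_smooth])

lemma symb_minus_inf_jbr_bounded: "a \<in> symb_minus_inf \<Longrightarrow> jbr_bounded a m"
  unfolding symb_minus_inf_iff by (auto dest!: spec[of _ "[]"])

lemma symb_tempered_sum_prods:
  fixes fgs :: "((('n::finite) phase_pt \<Rightarrow> 'b::real_normed_div_algebra) \<times> ('n phase_pt \<Rightarrow> 'b)) list"
  assumes fgs: "\<forall>(f, g)\<in>set fgs. f \<in> symb_tempered \<and> g \<in> symb_tempered"
  shows "sum_prods fgs \<in> symb_tempered"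
  unfolding symb_tempered_def
proof (intro CollectI conjI allI impI)
  show "smooth (sum_prods fgs)"
    using fgs symb_tempered_smooth by (blast intro: smooth_sum_prods)
  fix vs :: "'n phase_pt list" assume "set vs \<subseteq> coord_dirs"
  then obtain hs where "\<forall>(f, g)\<in>set hs. f \<in> symb_tempered \<and> g \<in> symb_tempered"
      "pderivs (sum_prods fgs) vs = sum_prods hs"
    using pderivs_sum_prods[of fgs "\<lambda>f. f \<in> symb_tempered" "\<lambda>g. g \<in> symb_tempered", OF fgs
        symb_tempered_differentiable symb_tempered_differentiable symb_tempered_dderiv symb_tempered_dderiv]
    by blast
  moreover have "\<forall>(f, g)\<in>set hs. (\<exists>m. jbr_bounded f m) \<and> (\<exists>m. jbr_bounded g m)"
    using calculation(1) symb_tempered_jbr_bounded by blast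
  ultimately show "\<exists>m. jbr_bounded (pderivs (sum_prods fgs) vs) m"
    using jbr_bounded_sum_prods_tempered by simp
qed

lemma symb_minus_inf_sum_prods:
  fixes fgs :: "((('n::finite) phase_pt \<Rightarrow> 'b::real_normed_div_algebra) \<times> ('n phase_pt \<Rightarrow> 'b)) list"
  assumes fgs: "\<forall>(f, g)\<in>set fgs. f \<in> symb_tempered \<and> g \<in> symb_minus_inf"
  shows "sum_prods fgs \<in> symb_minus_inf"
  unfolding symb_minus_inf_iff
proof (intro conjI allI impI)
  show "smooth (sum_prods fgs)"
    using fgs symb_tempered_smooth symb_minus_inf_smooth by (blast intro: smooth_sum_prods)
  fix vs :: "'n phase_pt list" and m assume "set vs \<subseteq> coord_dirs"
  then obtain hs where "\<forall>(f, g)\<in>set hs. f \<in> symb_tempered \<and> g \<in> symb_minus_inf"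
      "pderivs (sum_prods fgs) vs = sum_prods hs"
    using pderivs_sum_prods[of fgs "\<lambda>f. f \<in> symb_tempered" "\<lambda>g. g \<in> symb_minus_inf", OF fgs
        symb_tempered_differentiable symb_minus_inf_differentiable symb_tempered_dderiv symb_minus_inf_dderiv]
    by blast
  moreover have "\<forall>(f, g)\<in>set hs. (\<exists>m. jbr_bounded f m) \<and> (\<forall>m. jbr_bounded g m)"
    using calculation(1) symb_tempered_jbr_bounded symb_minus_inf_jbr_bounded by blast
  ultimately show "jbr_bounded (pderivs (sum_prods fgs) vs) m"
    using jbr_bounded_sum_prods_decaying by simp
qed

lemma symb_tempered_mult:
  fixes f g :: "('n::finite) phase_pt \<Rightarrow> 'b::real_normed_div_algebra"
  shows "f \<in> symb_tempered \<Longrightarrow> g \<in> symb_tempered \<Longrightarrow> (\<lambda>p. f p * g p) \<in> symb_tempered"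
  using symb_tempered_sum_prods[of "[(f, g)]"] by simp

lemma symb_tempered_add:
  fixes f g :: "('n::finite) phase_pt \<Rightarrow> 'b::real_normed_div_algebra"
  shows "f \<in> symb_tempered \<Longrightarrow> g \<in> symb_tempered \<Longrightarrow> (\<lambda>p. f p + g p) \<in> symb_tempered"
  using symb_tempered_sum_prods[of "[(f, \<lambda>_. 1), (g, \<lambda>_. 1)]"] by (simp add: const_in_symb_tempered)

lemma symb_tempered_mult_symb_minus_inf:
  fixes f a :: "('n::finite) phase_pt \<Rightarrow> 'b::real_normed_div_algebra"
  shows "f \<in> symb_tempered \<Longrightarrow> a \<in> symb_minus_inf \<Longrightarrow> (\<lambda>p. f p * a p) \<in> symb_minus_inf"
  using symb_minus_inf_sum_prods[of "[(f, a)]"] by simp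

lemma has_derivative_cis_mult:
  fixes d :: "'a::real_normed_vector \<Rightarrow> real" and k :: "'a \<Rightarrow> complex"
  assumes "smooth d" "k differentiable (at p)"
  shows "((\<lambda>p. cis (c * d p) * k p) has_derivative
           (\<lambda>v. cis (c * d p) * (\<i> * of_real c * of_real (dderiv d v p) * k p + dderiv k v p))) (at p)"
proof -
  have "(d has_derivative frechet_derivative d (at p)) (at p)"
    using assms(1) by (rule smooth_has_derivative)
  moreover have "(k has_derivative frechet_derivative k (at p)) (at p)"
    using assms(2) by (simp flip: frechet_derivative_works)
  ultimately show ?thesis
    by (auto intro!: derivative_eq_intros simp: dderiv_def scaleR_conv_of_real algebra_simps)
qed

lemma dderiv_cis_mult:
  fixes d :: "'a::real_normed_vector \<Rightarrow> real" and k :: "'a \<Rightarrow> complex"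
  assumes "smooth d" "\<And>p. k differentiable (at p)"
  shows "dderiv (\<lambda>p. cis (c * d p) * k p) v =
           (\<lambda>p. cis (c * d p) * (\<i> * of_real c * of_real (dderiv d v p) * k p + dderiv k v p))"
  using dderiv_eqI[OF has_derivative_cis_mult[OF assms]] by simp

lemma pderivs_cis_mult:
  fixes d :: "'a::real_normed_vector \<Rightarrow> real"
  assumes d: "smooth d" and one: "P (\<lambda>_. 1)"
    and diff: "\<And>k p. P k \<Longrightarrow> k differentiable (at p)"
    and closed: "\<And>k v. P k \<Longrightarrow> v \<in> S \<Longrightarrow>
                   P (\<lambda>p. \<i> * of_real c * of_real (dderiv d v p) * k p + dderiv k v p)"
    and vs: "set vs \<subseteq> S"
  shows "\<exists>k. P k \<and> pderivs (\<lambda>p. cis (c * d p)) vs = (\<lambda>p. cis (c * d p) * k p)"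
proof -
  define M where "M = {(\<lambda>p. cis (c * d p) * k p) | k. P k}"
  have "dderiv h v \<in> M" if "h \<in> M" "v \<in> S" for h v
    using that closed diff unfolding M_def by (fastforce simp: dderiv_cis_mult[OF d])
  moreover have "(\<lambda>p. cis (c * d p)) \<in> M"
    using one unfolding M_def by force
  ultimately have "pderivs (\<lambda>p. cis (c * d p)) vs \<in> M"
    using pderivs_in_dderiv_closed vs by blast
  then show ?thesis unfolding M_def by blast
qed

lemma cis_symb_tempered:
  fixes d :: "('n::finite) phase_pt \<Rightarrow> real"
  assumes d: "smooth d" and dd: "\<And>v. v \<in> coord_dirs \<Longrightarrow> dderiv d v \<in> symb_tempered"
  shows "(\<lambda>p. cis (c * d p)) \<in> symb_tempered"
  unfolding symb_tempered_def
proof (intro CollectI conjI allI impI)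
  show "smooth (\<lambda>p. cis (c * d p))"
    unfolding smooth_def
  proof (intro allI)
    fix vs and p :: "'n phase_pt"
    have "smooth (\<lambda>p. \<i> * of_real c * of_real (dderiv d v p) * k p + dderiv k v p)"
      if "smooth k" for k :: "'n phase_pt \<Rightarrow> complex" and v
      using that d by (intro smooth_add smooth_mult smooth_const smooth_dderiv
          smooth_linear[OF bounded_linear_of_real])
    then obtain k where k: "smooth k" and "pderivs (\<lambda>p. cis (c * d p)) vs = (\<lambda>p. cis (c * d p) * k p)"
      using pderivs_cis_mult[where P = smooth and S = UNIV and c = c and vs = vs, OF d smooth_const]
        smooth_differentiable by blast
    with has_derivative_cis_mult[OF d smooth_differentiable[OF k], where c = c and p = p]
    show "pderivs (\<lambda>p. cis (c * d p)) vs differentiable (at p)"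
      unfolding differentiable_def by auto
  qed
next
  fix vs :: "'n phase_pt list" assume vs: "set vs \<subseteq> coord_dirs"
  have "(\<lambda>p. \<i> * of_real c * of_real (dderiv d v p) * k p + dderiv k v p) \<in> symb_tempered"
    if "k \<in> symb_tempered" "v \<in> coord_dirs" for k v
    using symb_tempered_dderiv[OF that] dd[OF that(2)] that(1)
    by (intro symb_tempered_add symb_tempered_mult const_in_symb_tempered
        symb_tempered_linear[OF bounded_linear_of_real])
  then obtain k where "k \<in> symb_tempered" "pderivs (\<lambda>p. cis (c * d p)) vs = (\<lambda>p. cis (c * d p) * k p)"
    using pderivs_cis_mult[where P = "\<lambda>k. k \<in> symb_tempered" and S = coord_dirs and c = c,
        OF d const_in_symb_tempered symb_tempered_differentiable _ vs] by blast
  then show "\<exists>m. jbr_bounded (pderivs (\<lambda>p. cis (c * d p)) vs) m"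
    using symb_tempered_jbr_bounded by (simp add: jbr_bounded_def norm_mult)
qed

lemma OpPhiA_eq_OpA:
  assumes "\<And>x \<eta>. U (x, \<eta>) = x \<bullet> \<eta> + d (x, \<eta>)"
  shows "OpPhiA U A a = OpA A (\<lambda>p. cis (d p) * a p)"
proof -
  have "cis (U (x, \<eta>) - y \<bullet> \<eta>) = cis ((x - y) \<bullet> \<eta>) * cis (d (x, \<eta>))" for x y \<eta>
    by (simp add: assms cis_mult inner_diff_left algebra_simps)
  then show ?thesis
    unfolding OpPhiA_def OpA_def by (simp add: algebra_simps)
qed

lemma symb_plus_dderiv_symb_tempered:
  "d \<in> symb_plus \<Longrightarrow> v \<in> coord_dirs \<Longrightarrow> dderiv d v \<in> symb_tempered"
  unfolding symb_plus_def xdirs_def xidirs_def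
  using symb_subset_symb_tempered by (auto simp flip: pderivs_dderiv[of _ _ "[]"] simp: dderiv_def)

theorem lemma2p9:
  fixes U :: "(real^'n) \<times> (real^'n) \<Rightarrow> real"
    and A :: "real^'n \<Rightarrow> real^'n"
    and W :: "(real^'n \<Rightarrow> complex) \<Rightarrow> real^'n \<Rightarrow> complex"
  assumes "hyp_U U"
    and "magnetic_potential A"
  shows "(\<exists>a \<in> symb_minus_inf. \<forall>u. schwartz u \<longrightarrow> W u = OpPhiA U A a u)
     \<longleftrightarrow> (\<exists>b \<in> symb_minus_inf. \<forall>u. schwartz u \<longrightarrow> W u = OpA A b u)"
proof -
  obtain d where d: "d \<in> symb_plus" and U: "\<And>x \<eta>. U (x, \<eta>) = x \<bullet> \<eta> + d (x, \<eta>)"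
    using assms(1) unfolding hyp_U_def by blast
  have twist: "(\<lambda>p. cis (c * d p) * a p) \<in> symb_minus_inf" if "a \<in> symb_minus_inf" for a c
    using d that symb_plus_dderiv_symb_tempered
    by (intro symb_tempered_mult_symb_minus_inf cis_symb_tempered) (auto simp: symb_plus_def)
  have to_OpA: "OpPhiA U A a = OpA A (\<lambda>p. cis (1 * d p) * a p)" for a
    by (simp add: OpPhiA_eq_OpA[OF U])
  have to_OpPhiA: "OpA A b = OpPhiA U A (\<lambda>p. cis (- 1 * d p) * b p)" for b
    by (simp add: OpPhiA_eq_OpA[OF U] mult.assoc[symmetric] cis_mult)
  show ?thesis
  proof
    assume "\<exists>a \<in> symb_minus_inf. \<forall>u. schwartz u \<longrightarrow> W u = OpPhiA U A a u"
    then obtain a where a: "a \<in> symb_minus_inf" and W: "\<forall>u. schwartz u \<longrightarrow> W u = OpPhiA U A a u" ..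
    show "\<exists>b \<in> symb_minus_inf. \<forall>u. schwartz u \<longrightarrow> W u = OpA A b u"
      using W by (intro bexI[OF _ twist[OF a, of 1]]) (simp add: to_OpA)
  next
    assume "\<exists>b \<in> symb_minus_inf. \<forall>u. schwartz u \<longrightarrow> W u = OpA A b u"
    then obtain b where b: "b \<in> symb_minus_inf" and W: "\<forall>u. schwartz u \<longrightarrow> W u = OpA A b u" ..
    show "\<exists>a \<in> symb_minus_inf. \<forall>u. schwartz u \<longrightarrow> W u = OpPhiA U A a u"
      using W by (intro bexI[OF _ twist[OF b, of "- 1"]]) (simp add: to_OpPhiA)
  qed
qed

end
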